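(* Let $X_2$ be a first-order linear partial differential operator and $H\neq 0$ a linear partial differential operator, both in $\mathbf{F}[D_{x_1},\ldots,D_{x_n}]$. Then the element $\omega = -[X_2,H]H^{-1}$ of the skew Ore field $\mathbf{F}(D_{x_1},\ldots,D_{x_n})$ is a differential operator (i.e. lies in $\mathbf{F}[D_{x_1},\ldots,D_{x_n}]$) if and only if there is a function $\psi\in\mathbf{F}$ such that $HX_2 = (X_2+\psi)H$.
   Context: $\mathbf{F}$ is a differential field of functions of $x_1,\ldots,x_n$; $\mathbf{F}[D_{x_1},\ldots,D_{x_n}]$ is the ring of linear partial differential operators with coefficients in $\mathbf{F}$, and $\mathbf{F}(D_{x_1},\ldots,D_{x_n})$ its skew Ore field of formal left fractions $P^{-1}Q$ (with $P^{-1}Q\sim K^{-1}N$ iff $SP=TK$, $SQ=TN$ for some nonzero operators $S,T$). $[A,B]=AB-BA$. *)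

theory Defs
  imports Main
begin

text \<open>
  The differential field F is modelled as a field type 'a (characteristic 0, as a field
  of functions) equipped with n commuting derivations delta 0, ..., delta (n-1),
  delta i playing the role of the partial derivative with respect to x_(i+1).
\<close>

definition diff_field :: "nat \<Rightarrow> (nat \<Rightarrow> 'a::field \<Rightarrow> 'a) \<Rightarrow> bool" where
  "diff_field n \<delta> \<longleftrightarrow>
     (\<forall>i<n. \<forall>a b. \<delta> i (a + b) = \<delta> i a + \<delta> i b \<and> \<delta> i (a * b) = \<delta> i a * b + a * \<delta> i b) \<and>
     (\<forall>i<n. \<forall>j<n. \<forall>a. \<delta> i (\<delta> j a) = \<delta> j (\<delta> i a))"

text \<open>A linear partial differential operator sum_alpha P(alpha) D^alpha is represented by
  its coefficient function P, which has finite support consisting of multi-indices.\<close>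

definition multi_index :: "nat \<Rightarrow> (nat \<Rightarrow> nat) \<Rightarrow> bool" where
  "multi_index n \<alpha> \<longleftrightarrow> (\<forall>i\<ge>n. \<alpha> i = 0)"

definition is_pdo :: "nat \<Rightarrow> ((nat \<Rightarrow> nat) \<Rightarrow> 'a::zero) \<Rightarrow> bool" where
  "is_pdo n P \<longleftrightarrow> finite {\<alpha>. P \<alpha> \<noteq> 0} \<and> (\<forall>\<alpha>. P \<alpha> \<noteq> 0 \<longrightarrow> multi_index n \<alpha>)"

definition mi_order :: "nat \<Rightarrow> (nat \<Rightarrow> nat) \<Rightarrow> nat" where
  "mi_order n \<alpha> = (\<Sum>i<n. \<alpha> i)"

definition first_order :: "nat \<Rightarrow> ((nat \<Rightarrow> nat) \<Rightarrow> 'a::zero) \<Rightarrow> bool" where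
  "first_order n P \<longleftrightarrow> (\<forall>\<alpha>. P \<alpha> \<noteq> 0 \<longrightarrow> mi_order n \<alpha> \<le> 1) \<and> (\<exists>\<alpha>. P \<alpha> \<noteq> 0 \<and> mi_order n \<alpha> = 1)"

fun dpow :: "nat \<Rightarrow> (nat \<Rightarrow> 'a \<Rightarrow> 'a) \<Rightarrow> (nat \<Rightarrow> nat) \<Rightarrow> 'a \<Rightarrow> 'a" where
  "dpow 0 \<delta> \<gamma> b = b"
| "dpow (Suc k) \<delta> \<gamma> b = (\<delta> k ^^ \<gamma> k) (dpow k \<delta> \<gamma> b)"

definition mbinom :: "nat \<Rightarrow> (nat \<Rightarrow> nat) \<Rightarrow> (nat \<Rightarrow> nat) \<Rightarrow> nat" where
  "mbinom n \<alpha> \<gamma> = (\<Prod>i<n. \<alpha> i choose \<gamma> i)"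

text \<open>Composition of operators, via the Leibniz rule
  (a D^alpha)(b D^beta) = sum_(gamma <= alpha) C(alpha,gamma) a delta^gamma(b) D^(alpha-gamma+beta).\<close>
definition pdo_mult :: "nat \<Rightarrow> (nat \<Rightarrow> 'a::field \<Rightarrow> 'a) \<Rightarrow>
    ((nat \<Rightarrow> nat) \<Rightarrow> 'a) \<Rightarrow> ((nat \<Rightarrow> nat) \<Rightarrow> 'a) \<Rightarrow> ((nat \<Rightarrow> nat) \<Rightarrow> 'a)" where
  "pdo_mult n \<delta> P Q = (\<lambda>\<mu>.
     \<Sum>\<alpha>\<in>{\<alpha>. P \<alpha> \<noteq> 0}. \<Sum>\<beta>\<in>{\<beta>. Q \<beta> \<noteq> 0}. \<Sum>\<gamma>\<in>{\<gamma>. \<forall>i. \<gamma> i \<le> \<alpha> i}.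
       (if (\<lambda>i. \<alpha> i - \<gamma> i + \<beta> i) = \<mu>
        then of_nat (mbinom n \<alpha> \<gamma>) * P \<alpha> * dpow n \<delta> \<gamma> (Q \<beta>) else 0))"

definition pdo_add :: "((nat \<Rightarrow> nat) \<Rightarrow> 'a::ab_group_add) \<Rightarrow> ((nat \<Rightarrow> nat) \<Rightarrow> 'a) \<Rightarrow> ((nat \<Rightarrow> nat) \<Rightarrow> 'a)" where
  "pdo_add P Q = (\<lambda>\<mu>. P \<mu> + Q \<mu>)"

definition pdo_neg :: "((nat \<Rightarrow> nat) \<Rightarrow> 'a::ab_group_add) \<Rightarrow> ((nat \<Rightarrow> nat) \<Rightarrow> 'a)" where
  "pdo_neg P = (\<lambda>\<mu>. - P \<mu>)"

definition pdo_const :: "'a::zero \<Rightarrow> ((nat \<Rightarrow> nat) \<Rightarrow> 'a)" where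
  "pdo_const \<psi> = (\<lambda>\<mu>. if \<mu> = (\<lambda>_. 0) then \<psi> else 0)"

definition pdo_zero :: "(nat \<Rightarrow> nat) \<Rightarrow> 'a::zero" where
  "pdo_zero = (\<lambda>_. 0)"

definition pdo_comm :: "nat \<Rightarrow> (nat \<Rightarrow> 'a::field \<Rightarrow> 'a) \<Rightarrow>
    ((nat \<Rightarrow> nat) \<Rightarrow> 'a) \<Rightarrow> ((nat \<Rightarrow> nat) \<Rightarrow> 'a) \<Rightarrow> ((nat \<Rightarrow> nat) \<Rightarrow> 'a)" where
  "pdo_comm n \<delta> A B = (\<lambda>\<mu>. pdo_mult n \<delta> A B \<mu> - pdo_mult n \<delta> B A \<mu>)"

text \<open>The element A H^(-1) of the skew Ore field F(D_1,...,D_n) (H nonzero) lies in the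
  subring F[D_1,...,D_n] iff it equals (the image of) some operator W; since H is invertible
  in the skew field this is the condition W H = A.\<close>
definition rquot_is_pdo :: "nat \<Rightarrow> (nat \<Rightarrow> 'a::field \<Rightarrow> 'a) \<Rightarrow>
    ((nat \<Rightarrow> nat) \<Rightarrow> 'a) \<Rightarrow> ((nat \<Rightarrow> nat) \<Rightarrow> 'a) \<Rightarrow> bool" where
  "rquot_is_pdo n \<delta> A H \<longleftrightarrow> (\<exists>W. is_pdo n W \<and> pdo_mult n \<delta> W H = A)"

end

theory Submission
  imports Defs
begin

text \<open>
  If \<open>W H = H X\<^sub>2 - X\<^sub>2 H\<close> for an operator \<open>W\<close>, compare principal symbols: in order
  \<open>ord W + ord H\<close> the product \<open>W H\<close> has the nonzero coefficient \<open>\<sigma>(W) \<sigma>(H)\<close>, while the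
  commutator vanishes there as soon as \<open>ord W \<ge> 1\<close>, because symbols commute and \<open>X\<^sub>2\<close> has
  order one. Hence \<open>W\<close> is a function \<open>\<psi>\<close>, and \<open>\<psi> H = H X\<^sub>2 - X\<^sub>2 H\<close> is a rearrangement of
  \<open>H X\<^sub>2 = (X\<^sub>2 + \<psi>) H\<close>.
\<close>

lemma dpow_zero_index [simp]: "dpow k \<delta> (\<lambda>_. 0) b = b"
  by (induction k) auto

lemma mbinom_zero_index [simp]: "mbinom n \<alpha> (\<lambda>_. 0) = 1"
  by (simp add: mbinom_def)

lemma mi_order_add: "mi_order n (\<lambda>i. \<alpha> i + \<beta> i) = mi_order n \<alpha> + mi_order n \<beta>"
  by (simp add: mi_order_def sum.distrib)

lemma le_mi_order: "i < n \<Longrightarrow> \<alpha> i \<le> mi_order n \<alpha>"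
  unfolding mi_order_def by (rule member_le_sum) auto

lemma multi_index_eq_zero_iff_mi_order:
  assumes "multi_index n \<alpha>"
  shows "\<alpha> = (\<lambda>_. 0) \<longleftrightarrow> mi_order n \<alpha> = 0"
proof
  assume "mi_order n \<alpha> = 0"
  then have "\<forall>i<n. \<alpha> i = 0" by (simp add: mi_order_def)
  with assms show "\<alpha> = (\<lambda>_. 0)" by (auto simp: multi_index_def fun_eq_iff) (metis not_less)
qed (simp add: mi_order_def)

lemma finite_multi_indices_below:
  assumes "multi_index n \<alpha>"
  shows "finite {\<gamma>. \<forall>i. \<gamma> i \<le> \<alpha> i}"
proof -
  let ?S = "{\<gamma>. \<forall>i. \<gamma> i \<le> \<alpha> i}" and ?enc = "\<lambda>\<gamma>. map \<gamma> [0..<n]"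
  have "inj_on ?enc ?S"
  proof (rule inj_onI, rule ext)
    fix x y i assume "x \<in> ?S" "y \<in> ?S" "?enc x = ?enc y"
    then show "x i = y i"
      using assms by (cases "i < n") (auto simp: multi_index_def, metis le_zero_eq not_less)
  qed
  moreover have "?enc ` ?S \<subseteq> {xs. set xs \<subseteq> {..mi_order n \<alpha>} \<and> length xs = n}"
    by (fastforce intro: order_trans[OF _ le_mi_order])
  then have "finite (?enc ` ?S)"
    by (rule finite_subset) (rule finite_lists_length_eq, simp)
  ultimately show ?thesis by (rule finite_imageD[rotated])
qed

lemma is_pdo_pdo_const: "is_pdo n (pdo_const \<psi>)"
  by (auto simp: is_pdo_def pdo_const_def multi_index_def)

lemma pdo_eq_pdo_const_if_order_zero:
  assumes "is_pdo n W" and "\<And>\<alpha>. W \<alpha> \<noteq> 0 \<Longrightarrow> mi_order n \<alpha> = 0"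
  shows "W = pdo_const (W (\<lambda>_. 0))"
proof
  fix \<mu>
  show "W \<mu> = pdo_const (W (\<lambda>_. 0)) \<mu>"
  proof (cases "W \<mu> = 0")
    case False
    with assms have "\<mu> = (\<lambda>_. 0)"
      using multi_index_eq_zero_iff_mi_order by (auto simp: is_pdo_def)
    then show ?thesis by (simp add: pdo_const_def)
  qed (auto simp: pdo_const_def)
qed

lemma pdo_neg_pdo_comm: "pdo_neg (pdo_comm n \<delta> A B) = pdo_comm n \<delta> B A"
  by (simp add: pdo_neg_def pdo_comm_def fun_eq_iff)

lemma pdo_mult_eq_sum_over_superset:
  assumes "finite S" "{\<alpha>. P \<alpha> \<noteq> 0} \<subseteq> S"
  shows "pdo_mult n \<delta> P Q \<mu> = (\<Sum>\<alpha>\<in>S. \<Sum>\<beta>\<in>{\<beta>. Q \<beta> \<noteq> 0}. \<Sum>\<gamma>\<in>{\<gamma>. \<forall>i. \<gamma> i \<le> \<alpha> i}.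
       (if (\<lambda>i. \<alpha> i - \<gamma> i + \<beta> i) = \<mu>
        then of_nat (mbinom n \<alpha> \<gamma>) * P \<alpha> * dpow n \<delta> \<gamma> (Q \<beta>) else 0))"
  unfolding pdo_mult_def by (rule sum.mono_neutral_left[OF assms]) (intro ballI sum.neutral, auto)

lemma pdo_mult_pdo_add_left:
  assumes "is_pdo n P" "is_pdo n Q"
  shows "pdo_mult n \<delta> (pdo_add P Q) R \<mu> = pdo_mult n \<delta> P R \<mu> + pdo_mult n \<delta> Q R \<mu>"
proof -
  let ?S = "{\<alpha>. P \<alpha> \<noteq> 0} \<union> {\<alpha>. Q \<alpha> \<noteq> 0}"
  have fin: "finite ?S" using assms by (auto simp: is_pdo_def)
  have sub: "{\<alpha>. pdo_add P Q \<alpha> \<noteq> 0} \<subseteq> ?S" by (auto simp: pdo_add_def)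
  show ?thesis
    unfolding pdo_mult_eq_sum_over_superset[OF fin sub] pdo_mult_eq_sum_over_superset[OF fin Un_upper1]
      pdo_mult_eq_sum_over_superset[OF fin Un_upper2] sum.distrib[symmetric]
    by (intro sum.cong refl) (auto simp: pdo_add_def algebra_simps)
qed

text \<open>Junk value: the zero operator has order \<open>Max {}\<close>.\<close>
definition pdo_order :: "nat \<Rightarrow> ((nat \<Rightarrow> nat) \<Rightarrow> 'a::zero) \<Rightarrow> nat" where
  "pdo_order n P = Max (mi_order n ` {\<alpha>. P \<alpha> \<noteq> 0})"

lemma mi_order_le_pdo_order:
  "is_pdo n P \<Longrightarrow> P \<alpha> \<noteq> 0 \<Longrightarrow> mi_order n \<alpha> \<le> pdo_order n P"
  by (auto simp: pdo_order_def is_pdo_def)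

lemma pdo_order_attained:
  assumes "is_pdo n P" "P \<noteq> pdo_zero"
  obtains \<alpha> where "P \<alpha> \<noteq> 0" "mi_order n \<alpha> = pdo_order n P"
proof -
  have "{\<alpha>. P \<alpha> \<noteq> 0} \<noteq> {}" using assms(2) by (auto simp: pdo_zero_def)
  then have "pdo_order n P \<in> mi_order n ` {\<alpha>. P \<alpha> \<noteq> 0}"
    using assms(1) unfolding pdo_order_def is_pdo_def by (intro Max_in) auto
  then obtain \<alpha> where "P \<alpha> \<noteq> 0" "pdo_order n P = mi_order n \<alpha>" by auto
  then show ?thesis by (intro that) auto
qed

lemma first_order_pdo_order:
  assumes "is_pdo n P" "first_order n P"
  shows "pdo_order n P = 1"
proof (rule antisym)
  obtain \<alpha> where "P \<alpha> \<noteq> 0" "mi_order n \<alpha> = 1"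
    using assms(2) by (auto simp: first_order_def)
  moreover from this have "P \<noteq> pdo_zero" by (auto simp: pdo_zero_def)
  ultimately show "1 \<le> pdo_order n P" and "pdo_order n P \<le> 1"
    using assms by (metis mi_order_le_pdo_order, metis pdo_order_attained first_order_def)
qed

text \<open>The product of \<open>P\<close> and \<open>Q\<close> as commutative polynomials in the symbols \<open>\<xi>\<^sub>i\<close> of \<open>D\<^sub>i\<close>.\<close>
definition symbol_mult ::
    "((nat \<Rightarrow> nat) \<Rightarrow> 'a) \<Rightarrow> ((nat \<Rightarrow> nat) \<Rightarrow> 'a) \<Rightarrow> (nat \<Rightarrow> nat) \<Rightarrow> 'a::semiring_0" where
  "symbol_mult P Q \<mu> = (\<Sum>\<alpha>\<in>{\<alpha>. P \<alpha> \<noteq> 0}. \<Sum>\<beta>\<in>{\<beta>. Q \<beta> \<noteq> 0}.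
     if (\<lambda>i. \<alpha> i + \<beta> i) = \<mu> then P \<alpha> * Q \<beta> else 0)"

lemma symbol_mult_commute:
  fixes P Q :: "(nat \<Rightarrow> nat) \<Rightarrow> 'a::comm_semiring_0"
  shows "symbol_mult P Q \<mu> = symbol_mult Q P \<mu>"
  unfolding symbol_mult_def
proof (subst sum.swap, intro sum.cong refl)
  fix \<alpha> \<beta> :: "nat \<Rightarrow> nat"
  have "(\<lambda>i. \<alpha> i + \<beta> i) = (\<lambda>i. \<beta> i + \<alpha> i)" by (rule ext) (rule add.commute)
  then show "(if (\<lambda>i. \<alpha> i + \<beta> i) = \<mu> then P \<alpha> * Q \<beta> else 0)
      = (if (\<lambda>i. \<beta> i + \<alpha> i) = \<mu> then Q \<beta> * P \<alpha> else 0)"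
    by (simp only: mult.commute)
qed

text \<open>In orders at least \<open>ord P + ord Q\<close> only the term \<open>\<gamma> = 0\<close> of the Leibniz rule survives.\<close>
lemma pdo_mult_eq_symbol_mult:
  assumes P: "is_pdo n P" and Q: "is_pdo n Q"
    and \<mu>: "pdo_order n P + pdo_order n Q \<le> mi_order n \<mu>"
  shows "pdo_mult n \<delta> P Q \<mu> = symbol_mult P Q \<mu>"
  unfolding pdo_mult_def symbol_mult_def
proof (rule sum.cong[OF refl], rule sum.cong[OF refl])
  fix \<alpha> \<beta> assume "\<alpha> \<in> {\<alpha>. P \<alpha> \<noteq> 0}" and "\<beta> \<in> {\<beta>. Q \<beta> \<noteq> 0}"
  then have a: "P \<alpha> \<noteq> 0" and b: "Q \<beta> \<noteq> 0" by simp_all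
  have ma: "multi_index n \<alpha>" using a P by (simp add: is_pdo_def)
  have only_zero: "\<gamma> = (\<lambda>_. 0)"
    if g: "\<forall>i. \<gamma> i \<le> \<alpha> i" and e: "(\<lambda>i. \<alpha> i - \<gamma> i + \<beta> i) = \<mu>" for \<gamma>
  proof -
    have "(\<lambda>i. \<alpha> i - \<gamma> i + \<beta> i + \<gamma> i) = (\<lambda>i. \<alpha> i + \<beta> i)"
    proof
      fix i from g have "\<gamma> i \<le> \<alpha> i" ..
      then show "\<alpha> i - \<gamma> i + \<beta> i + \<gamma> i = \<alpha> i + \<beta> i" by arith
    qed
    then have "mi_order n \<mu> + mi_order n \<gamma> = mi_order n \<alpha> + mi_order n \<beta>"
      using mi_order_add[of n "\<lambda>i. \<alpha> i - \<gamma> i + \<beta> i" \<gamma>] mi_order_add[of n \<alpha> \<beta>] e by simp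
    moreover have "mi_order n \<alpha> + mi_order n \<beta> \<le> pdo_order n P + pdo_order n Q"
      by (rule add_mono[OF mi_order_le_pdo_order[of n P, OF P a] mi_order_le_pdo_order[of n Q, OF Q b]])
    ultimately have "mi_order n \<gamma> = 0" using \<mu> by linarith
    moreover have "multi_index n \<gamma>"
      using ma g unfolding multi_index_def by (metis le_zero_eq)
    ultimately show ?thesis by (simp add: multi_index_eq_zero_iff_mi_order)
  qed
  have "(\<Sum>\<gamma>\<in>{\<gamma>. \<forall>i. \<gamma> i \<le> \<alpha> i}. if (\<lambda>i. \<alpha> i - \<gamma> i + \<beta> i) = \<mu>
          then of_nat (mbinom n \<alpha> \<gamma>) * P \<alpha> * dpow n \<delta> \<gamma> (Q \<beta>) else 0)
      = (\<Sum>\<gamma>\<in>{\<gamma>. \<forall>i. \<gamma> i \<le> \<alpha> i}. if \<gamma> = (\<lambda>_. 0)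
          then (if (\<lambda>i. \<alpha> i + \<beta> i) = \<mu> then P \<alpha> * Q \<beta> else 0) else 0)"
  proof (rule sum.cong[OF refl])
    fix \<gamma> assume \<gamma>: "\<gamma> \<in> {\<gamma>. \<forall>i. \<gamma> i \<le> \<alpha> i}"
    show "(if (\<lambda>i. \<alpha> i - \<gamma> i + \<beta> i) = \<mu>
          then of_nat (mbinom n \<alpha> \<gamma>) * P \<alpha> * dpow n \<delta> \<gamma> (Q \<beta>) else 0)
      = (if \<gamma> = (\<lambda>_. 0) then (if (\<lambda>i. \<alpha> i + \<beta> i) = \<mu> then P \<alpha> * Q \<beta> else 0) else 0)"
    proof (cases "\<gamma> = (\<lambda>_. 0)")
      case False
      with \<gamma> only_zero have "(\<lambda>i. \<alpha> i - \<gamma> i + \<beta> i) \<noteq> \<mu>" by blast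
      with False show ?thesis by simp
    qed simp
  qed
  also have "\<dots> = (if (\<lambda>i. \<alpha> i + \<beta> i) = \<mu> then P \<alpha> * Q \<beta> else 0)"
    using finite_multi_indices_below[OF ma] by simp
  finally show "(\<Sum>\<gamma>\<in>{\<gamma>. \<forall>i. \<gamma> i \<le> \<alpha> i}. if (\<lambda>i. \<alpha> i - \<gamma> i + \<beta> i) = \<mu>
          then of_nat (mbinom n \<alpha> \<gamma>) * P \<alpha> * dpow n \<delta> \<gamma> (Q \<beta>) else 0)
      = (if (\<lambda>i. \<alpha> i + \<beta> i) = \<mu> then P \<alpha> * Q \<beta> else 0)" .
qed

lemma pdo_mult_commute_top_order:
  assumes "is_pdo n P" "is_pdo n Q" "pdo_order n P + pdo_order n Q \<le> mi_order n \<mu>"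
  shows "pdo_mult n \<delta> P Q \<mu> = pdo_mult n \<delta> Q P \<mu>"
  using assms by (simp add: pdo_mult_eq_symbol_mult symbol_mult_commute add.commute)

text \<open>Reading a multi-index of order \<open>< N\<close> as the base-\<open>N\<close> digits of a natural number
  linearly orders the monomials of a given order compatibly with addition.\<close>
definition mi_weight :: "nat \<Rightarrow> nat \<Rightarrow> (nat \<Rightarrow> nat) \<Rightarrow> nat" where
  "mi_weight n N \<alpha> = (\<Sum>i<n. \<alpha> i * N ^ i)"

lemma mi_weight_add: "mi_weight n N (\<lambda>i. \<alpha> i + \<beta> i) = mi_weight n N \<alpha> + mi_weight n N \<beta>"
  by (simp add: mi_weight_def sum.distrib distrib_right)

lemma mi_weight_less: "\<forall>i<n. \<alpha> i < N \<Longrightarrow> mi_weight n N \<alpha> < N ^ n"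
proof (induction n)
  case (Suc n)
  then have "mi_weight (Suc n) N \<alpha> < (\<alpha> n + 1) * N ^ n"
    by (simp add: mi_weight_def)
  also have "\<dots> \<le> N * N ^ n" using Suc.prems by (intro mult_right_mono) auto
  finally show ?case by simp
qed (simp add: mi_weight_def)

lemma mi_weight_digits_eq:
  assumes "\<forall>i<n. \<alpha> i < N" "\<forall>i<n. \<beta> i < N" "mi_weight n N \<alpha> = mi_weight n N \<beta>"
  shows "\<forall>i<n. \<alpha> i = \<beta> i"
  using assms
proof (induction n)
  case (Suc n)
  have A: "mi_weight n N \<alpha> < N ^ n" and B: "mi_weight n N \<beta> < N ^ n"
    using Suc.prems by (auto intro: mi_weight_less)
  have e: "mi_weight n N \<alpha> + \<alpha> n * N ^ n = mi_weight n N \<beta> + \<beta> n * N ^ n"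
    using Suc.prems by (simp add: mi_weight_def)
  have pos: "N ^ n > 0" using A by linarith
  have "\<alpha> n = (mi_weight n N \<alpha> + \<alpha> n * N ^ n) div N ^ n" using A pos by simp
  also have "\<dots> = \<beta> n" unfolding e using B pos by simp
  finally have top: "\<alpha> n = \<beta> n" .
  with e Suc show ?case by (simp add: less_Suc_eq)
qed simp

lemma inj_on_mi_weight: "inj_on (mi_weight n N) {\<alpha>. multi_index n \<alpha> \<and> mi_order n \<alpha> < N}"
proof (rule inj_onI, rule ext)
  fix \<alpha> \<beta> i
  assume \<alpha>: "\<alpha> \<in> {\<alpha>. multi_index n \<alpha> \<and> mi_order n \<alpha> < N}"
    and \<beta>: "\<beta> \<in> {\<alpha>. multi_index n \<alpha> \<and> mi_order n \<alpha> < N}"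
    and "mi_weight n N \<alpha> = mi_weight n N \<beta>"
  moreover have "\<forall>i<n. \<alpha> i < N" "\<forall>i<n. \<beta> i < N"
    using \<alpha> \<beta> le_mi_order by (auto intro: le_less_trans)
  ultimately have "\<forall>i<n. \<alpha> i = \<beta> i" by (intro mi_weight_digits_eq)
  then show "\<alpha> i = \<beta> i" using \<alpha> \<beta> by (cases "i < n") (auto simp: multi_index_def)
qed

lemma finite_obtain_arg_max:
  fixes f :: "'a \<Rightarrow> 'b::linorder"
  assumes "finite T" "T \<noteq> {}"
  obtains a where "a \<in> T" "\<And>x. x \<in> T \<Longrightarrow> f x \<le> f a"
proof -
  have "Max (f ` T) \<in> f ` T" using assms by simp
  then obtain a where "a \<in> T" "f a = Max (f ` T)" by auto
  then show ?thesis using that assms by simp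
qed

text \<open>Among the top-order monomials of \<open>P\<close> and of \<open>Q\<close> take those \<open>a\<close>, \<open>b\<close> of maximal weight;
  then \<open>a + b\<close> arises in only one way as a sum of monomials of \<open>P\<close> and \<open>Q\<close>.\<close>
lemma symbol_mult_top_order_nonzero:
  fixes P Q :: "(nat \<Rightarrow> nat) \<Rightarrow> 'a::semiring_no_zero_divisors"
  assumes P: "is_pdo n P" "P \<noteq> pdo_zero" and Q: "is_pdo n Q" "Q \<noteq> pdo_zero"
  obtains \<mu> where "mi_order n \<mu> = pdo_order n P + pdo_order n Q" "symbol_mult P Q \<mu> \<noteq> 0"
proof -
  let ?e = "pdo_order n P" and ?d = "pdo_order n Q"
  define N where "N = ?e + ?d + 1"
  let ?w = "mi_weight n N"
  define TP where "TP = {\<alpha>. P \<alpha> \<noteq> 0 \<and> mi_order n \<alpha> = ?e}"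
  define TQ where "TQ = {\<alpha>. Q \<alpha> \<noteq> 0 \<and> mi_order n \<alpha> = ?d}"
  have finP: "finite {\<alpha>. P \<alpha> \<noteq> 0}" and finQ: "finite {\<alpha>. Q \<alpha> \<noteq> 0}"
    using P Q by (auto simp: is_pdo_def)
  have "finite TP" "TP \<noteq> {}"
    using finP pdo_order_attained[OF P] by (auto simp: TP_def elim: finite_subset[rotated])
  then obtain a where a: "a \<in> TP" "\<And>x. x \<in> TP \<Longrightarrow> ?w x \<le> ?w a"
    by (rule finite_obtain_arg_max[where f = ?w]) blast+
  have "finite TQ" "TQ \<noteq> {}"
    using finQ pdo_order_attained[OF Q] by (auto simp: TQ_def elim: finite_subset[rotated])
  then obtain b where b: "b \<in> TQ" "\<And>x. x \<in> TQ \<Longrightarrow> ?w x \<le> ?w b"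
    by (rule finite_obtain_arg_max[where f = ?w]) blast+
  define \<mu> where "\<mu> = (\<lambda>i. a i + b i)"
  have unique: "x = a \<and> y = b"
    if x: "P x \<noteq> 0" and y: "Q y \<noteq> 0" and xy: "(\<lambda>i. x i + y i) = \<mu>" for x y
  proof -
    have sum: "mi_order n x + mi_order n y = ?e + ?d"
      using arg_cong[OF xy, of "mi_order n"] a(1) b(1) by (simp add: mi_order_add \<mu>_def TP_def TQ_def)
    have "mi_order n x \<le> ?e" "mi_order n y \<le> ?d"
      using x y P(1) Q(1) by (simp_all add: mi_order_le_pdo_order)
    with sum x y have xT: "x \<in> TP" and yT: "y \<in> TQ"
      by (simp_all add: TP_def TQ_def)
    have "?w x + ?w y = ?w a + ?w b"
      using arg_cong[OF xy, of ?w] by (simp add: mi_weight_add \<mu>_def)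
    with a(2)[OF xT] b(2)[OF yT] have "?w x = ?w a" by linarith
    moreover have "x \<in> {\<alpha>. multi_index n \<alpha> \<and> mi_order n \<alpha> < N}" "a \<in> {\<alpha>. multi_index n \<alpha> \<and> mi_order n \<alpha> < N}"
      using xT a(1) P by (auto simp: TP_def N_def is_pdo_def)
    ultimately have "x = a" by (rule inj_onD[OF inj_on_mi_weight])
    with xy show ?thesis by (auto simp: \<mu>_def fun_eq_iff)
  qed
  have "symbol_mult P Q \<mu> = (\<Sum>\<alpha>\<in>{\<alpha>. P \<alpha> \<noteq> 0}. \<Sum>\<beta>\<in>{\<beta>. Q \<beta> \<noteq> 0}.
           if \<beta> = b then (if \<alpha> = a then P a * Q b else 0) else 0)"
    unfolding symbol_mult_def
  proof (intro sum.cong refl)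
    fix x y assume "x \<in> {\<alpha>. P \<alpha> \<noteq> 0}" "y \<in> {\<beta>. Q \<beta> \<noteq> 0}"
    then show "(if (\<lambda>i. x i + y i) = \<mu> then P x * Q y else 0)
        = (if y = b then if x = a then P a * Q b else 0 else 0)"
      using unique by (auto simp: \<mu>_def)
  qed
  also have "\<dots> = P a * Q b" using a(1) b(1) finP finQ by (simp add: TP_def TQ_def)
  finally have "symbol_mult P Q \<mu> \<noteq> 0" using a(1) b(1) by (simp add: TP_def TQ_def)
  moreover have "mi_order n \<mu> = ?e + ?d"
    using a(1) b(1) by (simp add: \<mu>_def mi_order_add TP_def TQ_def)
  ultimately show ?thesis using that by blast
qed

lemma pdo_mult_top_order_nonzero:
  assumes "is_pdo n P" "P \<noteq> pdo_zero" "is_pdo n Q" "Q \<noteq> pdo_zero"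
  obtains \<mu> where "mi_order n \<mu> = pdo_order n P + pdo_order n Q" "pdo_mult n \<delta> P Q \<mu> \<noteq> 0"
proof -
  obtain \<mu> where \<mu>: "mi_order n \<mu> = pdo_order n P + pdo_order n Q" and "symbol_mult P Q \<mu> \<noteq> 0"
    by (rule symbol_mult_top_order_nonzero[OF assms])
  moreover have "pdo_mult n \<delta> P Q \<mu> = symbol_mult P Q \<mu>"
    using assms \<mu> by (simp add: pdo_mult_eq_symbol_mult)
  ultimately show ?thesis using that by simp
qed

lemma order_zero_if_mult_eq_pdo_comm:
  assumes W: "is_pdo n W" and X: "is_pdo n X" "first_order n X"
    and H: "is_pdo n H" "H \<noteq> pdo_zero"
    and eq: "pdo_mult n \<delta> W H = pdo_comm n \<delta> H X"
    and "W \<alpha> \<noteq> 0"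
  shows "mi_order n \<alpha> = 0"
proof (rule ccontr)
  assume "mi_order n \<alpha> \<noteq> 0"
  with W \<open>W \<alpha> \<noteq> 0\<close> have e: "1 \<le> pdo_order n W"
    using mi_order_le_pdo_order by fastforce
  have "W \<noteq> pdo_zero" using \<open>W \<alpha> \<noteq> 0\<close> by (auto simp: pdo_zero_def)
  then obtain \<mu> where \<mu>: "mi_order n \<mu> = pdo_order n W + pdo_order n H"
    and nz: "pdo_mult n \<delta> W H \<mu> \<noteq> 0"
    using pdo_mult_top_order_nonzero W H by blast
  have "pdo_order n H + pdo_order n X \<le> mi_order n \<mu>"
    using \<mu> e first_order_pdo_order[OF X] by simp
  then have "pdo_comm n \<delta> H X \<mu> = 0"
    using pdo_mult_commute_top_order[OF H(1) X(1)] by (simp add: pdo_comm_def)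
  with eq nz show False by simp
qed

lemma pdo_const_mult_eq_pdo_comm_iff:
  assumes "is_pdo n X"
  shows "pdo_mult n \<delta> (pdo_const \<psi>) H = pdo_comm n \<delta> H X \<longleftrightarrow>
         pdo_mult n \<delta> H X = pdo_mult n \<delta> (pdo_add X (pdo_const \<psi>)) H"
  using pdo_mult_pdo_add_left[OF assms is_pdo_pdo_const, of \<delta> \<psi> H]
  by (auto simp: pdo_comm_def fun_eq_iff algebra_simps)

theorem lemma2:
  fixes n :: nat and \<delta> :: "nat \<Rightarrow> 'a::field_char_0 \<Rightarrow> 'a"
    and X2 H :: "(nat \<Rightarrow> nat) \<Rightarrow> 'a"
  assumes "diff_field n \<delta>"
    and "is_pdo n X2" and "first_order n X2"
    and "is_pdo n H" and "H \<noteq> pdo_zero"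
  shows "rquot_is_pdo n \<delta> (pdo_neg (pdo_comm n \<delta> X2 H)) H \<longleftrightarrow>
         (\<exists>\<psi>::'a. pdo_mult n \<delta> H X2 = pdo_mult n \<delta> (pdo_add X2 (pdo_const \<psi>)) H)"
proof
  assume "rquot_is_pdo n \<delta> (pdo_neg (pdo_comm n \<delta> X2 H)) H"
  then obtain W where W: "is_pdo n W" and eq: "pdo_mult n \<delta> W H = pdo_comm n \<delta> H X2"
    by (auto simp: rquot_is_pdo_def pdo_neg_pdo_comm)
  have "W = pdo_const (W (\<lambda>_. 0))"
    using pdo_eq_pdo_const_if_order_zero[OF W] order_zero_if_mult_eq_pdo_comm[OF W assms(2-5) eq]
    by blast
  with eq show "\<exists>\<psi>. pdo_mult n \<delta> H X2 = pdo_mult n \<delta> (pdo_add X2 (pdo_const \<psi>)) H"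
    using pdo_const_mult_eq_pdo_comm_iff[OF assms(2)] by metis
next
  assume "\<exists>\<psi>. pdo_mult n \<delta> H X2 = pdo_mult n \<delta> (pdo_add X2 (pdo_const \<psi>)) H"
  then obtain \<psi> where "pdo_mult n \<delta> (pdo_const \<psi>) H = pdo_comm n \<delta> H X2"
    using pdo_const_mult_eq_pdo_comm_iff[OF assms(2)] by blast
  then show "rquot_is_pdo n \<delta> (pdo_neg (pdo_comm n \<delta> X2 H)) H"
    unfolding rquot_is_pdo_def pdo_neg_pdo_comm using is_pdo_pdo_const by blast
qed

end
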